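(* Let $\lambda\in\mathbb R$ and let $\xi$ be a pseudo symmetric measure. Let $\ell=(1,\lambda,\lambda)'$, $\ell_2=(0,1,1)'$, $Q_{\xi,2}=\ell_2'V_\xi\ell_2$ and $q_{\xi,2}^*=\ell'V_\xi\ell-(\ell'V_\xi\ell_2)^2\,Q_{\xi,2}^+$ (where $a^+=1/a$ for $a\ne0$ and $0^+=0$). Then for every $\tau\in\mathcal T$ the eigenvalues of $\tilde C_\xi(\tau)$, counted with multiplicity, are $0$ (multiplicity $1$), $(t-1)^{-1}q_{\xi,2}^*$ (multiplicity $1$) and $(t-1)^{-1}\ell'V_\xi\ell$ (multiplicity $t-2$). Moreover $q_{\xi,2}^*\le\ell'V_\xi\ell$.
   Context: Fix integers $k\ge 2$ and $t\ge 2$. Let $\mathcal S$ be the set of all $t^k$ sequences $s=(t_1,\dots,t_k)$ with entries $t_j\in\{1,\dots,t\}$. For $s\in\mathcal S$ let $T_s$ be the $k\times t$ matrix with $(j,i)$ entry equal to $1$ if $t_j=i$ and $0$ otherwise; let $H$ be the $k\times k$ matrix with $(i,j)$ entry $1$ if $i\equiv j+1\pmod k$ and $0$ otherwise; put $L_s=HT_s$, $R_s=H'T_s$ (a prime denotes transpose). Let $\Sigma$ be a fixed $k\times k$ positive definite matrix, $1_k$ the all-ones vector, and $\tilde B=\Sigma^{-1}-\Sigma^{-1}1_k1_k'\Sigma^{-1}/(1_k'\Sigma^{-1}1_k)$. With $G_0=T_s,G_1=L_s,G_2=R_s$ define for $0\le i,j\le 2$ the $t\times t$ matrices $C_{sij}=G_i'\tilde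 BG_j$. A measure is a vector $\xi=(p_s)_{s\in\mathcal S}$ with $p_s\ge0$, $\sum_sp_s=1$. Put $C_{\xi ij}=\sum_sp_sC_{sij}$, $c_{\xi ij}=\operatorname{tr}(C_{\xi ij})$, $V_\xi=(c_{\xi ij})_{0\le i,j\le2}$. The measure $\xi$ is pseudo symmetric if each $C_{\xi ij}$ is completely symmetric, i.e. of the form $aI_t+bJ_t$ with $J_t$ the all-ones matrix. $M^+$ denotes the Moore–Penrose inverse. For $u,w\in\mathbb R^3$ (coordinates indexed $0,1,2$) let $C_\xi[u,w]=\sum_{i,j=0}^2u_iw_jC_{\xi ij}$. Let $\mathcal T=\{x\in\mathbb R^t:1_t'x=0,\ x\ne0\}$. For $u\in\mathbb R^3$, vectors $w_1,\dots,w_m\in\mathbb R^3$ ($m\in\{1,2\}$) and $x\in\mathcal T$ define $\mathcal I_\xi(u;w_1,\dots,w_m;x)=C_\xi[u,u]-F'G^+F$, where $F$ is the $m\times t$ matrix whose $a$-th row is $(C_\xi[u,w_a]x)'$ and $G$ is the $m\times m$ matrix with entries $x'C_\xi[w_a,w_b]x$. Undirectional model: the information matrix of $\xi$ for the direct treatment effect is $\tilde C_\xi(\tau)=\mathcal I_\xi(\ell;\ell_2;\tau)$, $\tau\in\mathcal T$, with $\ell=(1,\lambda,\lambda)'$, $\ell_2=(0,1,1)'$. *)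

theory Defs
  imports "Jordan_Normal_Form.Matrix" "Jordan_Normal_Form.Char_Poly"
begin

(* Indices are 0-based: rows/periods j \<in> {0..<k}, treatments i \<in> {0..<t}. *)

definition seqs :: "nat \<Rightarrow> nat \<Rightarrow> nat list set" where
  "seqs k t = {s. length s = k \<and> set s \<subseteq> {0..<t}}"

definition Tmat :: "nat \<Rightarrow> nat \<Rightarrow> nat list \<Rightarrow> real mat" where
  "Tmat k t s = mat k t (\<lambda>(j,i). if s ! j = i then 1 else 0)"

definition Hmat :: "nat \<Rightarrow> real mat" where
  "Hmat k = mat k k (\<lambda>(i,j). if i = (j + 1) mod k then 1 else 0)"

definition Lmat :: "nat \<Rightarrow> nat \<Rightarrow> nat list \<Rightarrow> real mat" where
  "Lmat k t s = Hmat k * Tmat k t s"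

definition Rmat :: "nat \<Rightarrow> nat \<Rightarrow> nat list \<Rightarrow> real mat" where
  "Rmat k t s = (Hmat k)\<^sup>T * Tmat k t s"

definition pos_def_mat :: "nat \<Rightarrow> real mat \<Rightarrow> bool" where
  "pos_def_mat k A \<longleftrightarrow> A \<in> carrier_mat k k \<and> A\<^sup>T = A \<and>
     (\<forall>x \<in> carrier_vec k. x \<noteq> 0\<^sub>v k \<longrightarrow> x \<bullet> (A *\<^sub>v x) > 0)"

definition mat_inv :: "real mat \<Rightarrow> real mat" where
  "mat_inv A = (THE B. B \<in> carrier_mat (dim_row A) (dim_row A) \<and>
                 A * B = 1\<^sub>m (dim_row A) \<and> B * A = 1\<^sub>m (dim_row A))"

definition mp_inv :: "real mat \<Rightarrow> real mat" where
  "mp_inv A = (THE X. X \<in> carrier_mat (dim_col A) (dim_row A) \<and>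
      A * X * A = A \<and> X * A * X = X \<and> (A * X)\<^sup>T = A * X \<and> (X * A)\<^sup>T = X * A)"

definition ones_vec :: "nat \<Rightarrow> real vec" where
  "ones_vec n = vec n (\<lambda>_. 1)"

definition Btilde :: "nat \<Rightarrow> real mat \<Rightarrow> real mat" where
  "Btilde k Sg = (let Si = mat_inv Sg; e = ones_vec k in
     Si - (1 / (e \<bullet> (Si *\<^sub>v e))) \<cdot>\<^sub>m (Si * mat_of_cols k [e] * mat_of_rows k [e] * Si))"

definition Gmat :: "nat \<Rightarrow> nat \<Rightarrow> nat list \<Rightarrow> nat \<Rightarrow> real mat" where
  "Gmat k t s i = (if i = 0 then Tmat k t s else if i = 1 then Lmat k t s else Rmat k t s)"

definition Cs :: "nat \<Rightarrow> nat \<Rightarrow> real mat \<Rightarrow> nat list \<Rightarrow> nat \<Rightarrow> nat \<Rightarrow> real mat" where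
  "Cs k t Sg s i j = (Gmat k t s i)\<^sup>T * Btilde k Sg * Gmat k t s j"

definition is_measure :: "nat \<Rightarrow> nat \<Rightarrow> (nat list \<Rightarrow> real) \<Rightarrow> bool" where
  "is_measure k t p \<longleftrightarrow> (\<forall>s \<in> seqs k t. p s \<ge> 0) \<and> (\<Sum>s \<in> seqs k t. p s) = 1"

definition Cxi :: "nat \<Rightarrow> nat \<Rightarrow> real mat \<Rightarrow> (nat list \<Rightarrow> real) \<Rightarrow> nat \<Rightarrow> nat \<Rightarrow> real mat" where
  "Cxi k t Sg p i j = mat t t (\<lambda>(a,b). \<Sum>s \<in> seqs k t. p s * Cs k t Sg s i j $$ (a,b))"

definition trace_mat :: "real mat \<Rightarrow> real" where
  "trace_mat A = (\<Sum>i < dim_row A. A $$ (i,i))"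

definition Vxi :: "nat \<Rightarrow> nat \<Rightarrow> real mat \<Rightarrow> (nat list \<Rightarrow> real) \<Rightarrow> real mat" where
  "Vxi k t Sg p = mat 3 3 (\<lambda>(i,j). trace_mat (Cxi k t Sg p i j))"

definition completely_symmetric :: "nat \<Rightarrow> real mat \<Rightarrow> bool" where
  "completely_symmetric t A \<longleftrightarrow>
     (\<exists>a b. A = a \<cdot>\<^sub>m 1\<^sub>m t + b \<cdot>\<^sub>m mat t t (\<lambda>_. 1))"

definition pseudo_symmetric :: "nat \<Rightarrow> nat \<Rightarrow> real mat \<Rightarrow> (nat list \<Rightarrow> real) \<Rightarrow> bool" where
  "pseudo_symmetric k t Sg p \<longleftrightarrow>
     (\<forall>i < 3. \<forall>j < 3. completely_symmetric t (Cxi k t Sg p i j))"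

definition Cuw :: "nat \<Rightarrow> nat \<Rightarrow> real mat \<Rightarrow> (nat list \<Rightarrow> real) \<Rightarrow> real vec \<Rightarrow> real vec \<Rightarrow> real mat" where
  "Cuw k t Sg p u w = mat t t (\<lambda>(a,b).
     \<Sum>i < 3. \<Sum>j < 3. u $ i * w $ j * Cxi k t Sg p i j $$ (a,b))"

definition contrast_set :: "nat \<Rightarrow> real vec set" where
  "contrast_set t = {x \<in> carrier_vec t. ones_vec t \<bullet> x = 0 \<and> x \<noteq> 0\<^sub>v t}"

definition Info :: "nat \<Rightarrow> nat \<Rightarrow> real mat \<Rightarrow> (nat list \<Rightarrow> real) \<Rightarrow> real vec \<Rightarrow> real vec list \<Rightarrow> real vec \<Rightarrow> real mat" where
  "Info k t Sg p u ws x = (let m = length ws;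
      F = mat m t (\<lambda>(a,b). (Cuw k t Sg p u (ws ! a) *\<^sub>v x) $ b);
      G = mat m m (\<lambda>(a,b). x \<bullet> (Cuw k t Sg p (ws ! a) (ws ! b) *\<^sub>v x))
    in Cuw k t Sg p u u - F\<^sup>T * mp_inv G * F)"

definition ell :: "real \<Rightarrow> real vec" where
  "ell lam = vec_of_list [1, lam, lam]"

definition ell2 :: "real vec" where
  "ell2 = vec_of_list [0, 1, 1]"

definition Ctilde :: "nat \<Rightarrow> nat \<Rightarrow> real mat \<Rightarrow> (nat list \<Rightarrow> real) \<Rightarrow> real \<Rightarrow> real vec \<Rightarrow> real mat" where
  "Ctilde k t Sg p lam tau = Info k t Sg p (ell lam) [ell2] tau"

end

theory Submission
  imports Defs
begin

text \<open>
  Each design matrix T, L = H T and R = H' T is row-stochastic, while B annihilates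
  the all-ones vector; hence every C_{s i j}, and so every C_{xi i j}, has zero row sums.
  A completely symmetric t x t matrix with zero row sums is its trace divided by t - 1 times
  the centring matrix I - J/t, so C_xi[u,w] = u'V w/(t - 1) (I - J/t), and every contrast tau
  is an eigenvector of all of these.  The information matrix is therefore a multiple of the
  centring matrix minus a rank-one term along tau, which is orthogonal to the all-ones vector;
  its characteristic polynomial follows from the matrix determinant lemma.  Finally
  q* <= l'V l because V is positive semidefinite, which in turn holds because B is
  (Cauchy-Schwarz for the form of the inverse of Sigma).
\<close>

section \<open>Linear algebra\<close>

lemma det_one_plus_rank_one:
  fixes v w :: "nat \<Rightarrow> real"
  shows "det (mat n n (\<lambda>(i,j). (if i = j then 1 else 0) + v i * w j)) = 1 + (\<Sum>i<n. w i * v i)"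
proof -
  define I where "I = (1\<^sub>m n :: real mat)"
  define Vc where "Vc = mat n 1 (\<lambda>(i,_). v i)"
  define Wr where "Wr = mat 1 n (\<lambda>(_,j). - w j)"
  define d where "d = 1 + (\<Sum>i<n. w i * v i)"
  define D where "D = mat 1 1 (\<lambda>_. d)"
  define M where "M = mat n n (\<lambda>(i,j). (if i = j then 1 else 0) + v i * w j)"
  define A where "A = four_block_mat I Vc Wr (1\<^sub>m 1)"
  have c: "I \<in> carrier_mat n n" "Vc \<in> carrier_mat n 1" "Wr \<in> carrier_mat 1 n" "M \<in> carrier_mat n n"
     "D \<in> carrier_mat 1 1" "(0\<^sub>m n 1 :: real mat) \<in> carrier_mat n 1" "(0\<^sub>m 1 n :: real mat) \<in> carrier_mat 1 n"
     "(1\<^sub>m 1 :: real mat) \<in> carrier_mat 1 1"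
    by (auto simp: I_def Vc_def Wr_def M_def D_def)
  \<comment> \<open>Both determinants are that of the bordered matrix A, factored once as lower times upper
      block-triangular and once as upper times lower block-triangular.\<close>
  have A_lower_upper: "A = four_block_mat I (0\<^sub>m n 1) Wr (1\<^sub>m 1) * four_block_mat I Vc (0\<^sub>m 1 n) D"
    unfolding mult_four_block_mat[OF c(1) c(6) c(3) c(8) c(1) c(2) c(7) c(5)] A_def
    using c by (intro cong_four_block_mat eq_matI)
      (auto simp: I_def Wr_def Vc_def d_def D_def scalar_prod_def sum_negf atLeast0LessThan)
  have "det A = det (four_block_mat I (0\<^sub>m n 1) Wr (1\<^sub>m 1)) * det (four_block_mat I Vc (0\<^sub>m 1 n) D)"
    unfolding A_lower_upper by (rule det_mult[of _ "n+1"]) (use c in auto)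
  also have "\<dots> = d"
    unfolding det_four_block_mat_upper_right_zero[OF c(1) refl c(3) c(8)]
      det_four_block_mat_lower_left_zero[OF c(1) c(2) refl c(5)]
    by (simp add: I_def D_def det_single)
  finally have "det A = d" .
  have A_upper_lower: "A = four_block_mat M Vc (0\<^sub>m 1 n) (1\<^sub>m 1) * four_block_mat I (0\<^sub>m n 1) Wr (1\<^sub>m 1)"
    unfolding mult_four_block_mat[OF c(4) c(2) c(7) c(8) c(1) c(6) c(3) c(8)] A_def
    using c by (intro cong_four_block_mat eq_matI) (auto simp: I_def Wr_def Vc_def M_def scalar_prod_def)
  have "det A = det (four_block_mat M Vc (0\<^sub>m 1 n) (1\<^sub>m 1)) * det (four_block_mat I (0\<^sub>m n 1) Wr (1\<^sub>m 1))"
    unfolding A_upper_lower by (rule det_mult[of _ "n+1"]) (use c in auto)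
  also have "\<dots> = det M"
    unfolding det_four_block_mat_upper_right_zero[OF c(1) refl c(3) c(8)]
      det_four_block_mat_lower_left_zero[OF c(4) c(2) refl c(8)]
    by (simp add: I_def)
  finally show ?thesis
    using \<open>det A = d\<close> by (simp add: M_def d_def)
qed

lemma poly_eq_if_poly_eq_except:
  fixes p q :: "real poly"
  assumes "\<And>x. x \<noteq> a \<Longrightarrow> poly p x = poly q x"
  shows "p = q"
proof (rule ccontr)
  assume "p \<noteq> q"
  then have "finite {x. poly (p - q) x = 0}"
    using poly_roots_finite by (metis eq_iff_diff_eq_0)
  moreover have "UNIV - {a} \<subseteq> {x. poly (p - q) x = 0}"
    using assms by auto
  ultimately show False
    by (metis finite_subset finite_Diff2 finite.emptyI finite_insert infinite_UNIV_char_0)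
qed

lemma scalar_minus_orthogonal_rank_two_factor:
  fixes u w :: "nat \<Rightarrow> real"
  assumes c: "c \<noteq> 0" and orth: "(\<Sum>l<n. u l * w l) = 0"
  shows "mat n n (\<lambda>(i,j). (if i = j then c else 0) - a * u i * u j - b * w i * w j)
       = (c \<cdot>\<^sub>m mat n n (\<lambda>(i,j). (if i = j then 1 else 0) + (- a / c * u i) * u j))
         * mat n n (\<lambda>(i,j). (if i = j then 1 else 0) + (- b / c * w i) * w j)"
    (is "?M = ?N1 * ?N2")
proof (rule eq_matI)
  fix i j assume "i < dim_row (?N1 * ?N2)" "j < dim_col (?N1 * ?N2)"
  then have i: "i < n" and j: "j < n" by auto
  have "(?N1 * ?N2) $$ (i,j) = (\<Sum>l<n. c * ((if i = l then 1 else 0) + (- a / c * u i) * u l)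
                                     * ((if l = j then 1 else 0) + (- b / c * w l) * w j))"
    using i j by (simp add: scalar_prod_def atLeast0LessThan ac_simps)
  also have "\<dots> = (\<Sum>l<n. (if i = l then c * (if l = j then 1 else 0) - b * w l * w j else 0)
           - (if l = j then a * u i * u l else 0) + a * b / c * u i * w j * (u l * w l))"
    using c by (intro sum.cong) (auto simp: field_simps)
  also have "\<dots> = ?M $$ (i,j)"
  proof -
    have "(\<Sum>l<n. a * b / c * u i * w j * (u l * w l)) = 0"
      by (simp only: orth flip: sum_distrib_left)
    then show ?thesis
      using i j by (simp add: sum.distrib sum_subtractf)
  qed
  finally show "?M $$ (i,j) = (?N1 * ?N2) $$ (i,j)" ..
qed auto

lemma char_poly_scalar_plus_orthogonal_rank_two:
  fixes u w :: "nat \<Rightarrow> real"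
  assumes n: "n \<ge> 2" and orth: "(\<Sum>i<n. u i * w i) = 0"
  shows "char_poly (mat n n (\<lambda>(i,j). (if i = j then al else 0) + a * u i * u j + b * w i * w j))
     = [:- (al + a * (\<Sum>i<n. u i * u i)), 1:] * [:- (al + b * (\<Sum>i<n. w i * w i)), 1:] * [:- al, 1:] ^ (n - 2)"
    (is "char_poly ?M = ?R")
proof (rule poly_eq_if_poly_eq_except[of al])
  fix x assume "x \<noteq> al"
  define c where "c = x - al"
  have c: "c \<noteq> 0"
    using \<open>x \<noteq> al\<close> by (simp add: c_def)
  define N1 where "N1 = mat n n (\<lambda>(i,j). (if i = j then 1 else 0) + (- a / c * u i) * u j)"
  define N2 where "N2 = mat n n (\<lambda>(i,j). (if i = j then 1 else 0) + (- b / c * w i) * w j)"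
  have "- char_matrix ?M x = mat n n (\<lambda>(i,j). (if i = j then c else 0) - a * u i * u j - b * w i * w j)"
    by (rule eq_matI) (auto simp: char_matrix_def c_def)
  also have "\<dots> = (c \<cdot>\<^sub>m N1) * N2"
    unfolding N1_def N2_def by (rule scalar_minus_orthogonal_rank_two_factor[OF c orth])
  finally have "poly (char_poly ?M) x = det ((c \<cdot>\<^sub>m N1) * N2)"
    using char_poly_matrix[of ?M n x] by simp
  also have "\<dots> = c ^ n * det N1 * det N2"
    by (simp add: det_mult[of _ n] N1_def N2_def)
  also have "\<dots> = c * c * c ^ (n - 2) * (1 - a / c * (\<Sum>i<n. u i * u i)) * (1 - b / c * (\<Sum>i<n. w i * w i))"
  proof -
    have "c ^ n = c * c * c ^ (n - 2)"
      using n by (metis le_add_diff_inverse power_add power2_eq_square)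
    then show ?thesis
      unfolding N1_def N2_def det_one_plus_rank_one by (simp add: sum_distrib_left sum_negf ac_simps)
  qed
  also have "\<dots> = (c - a * (\<Sum>i<n. u i * u i)) * (c - b * (\<Sum>i<n. w i * w i)) * c ^ (n - 2)"
    using c by (simp add: field_simps)
  also have "\<dots> = poly ?R x"
    by (simp add: c_def algebra_simps)
  finally show "poly (char_poly ?M) x = poly ?R x" .
qed

lemma mp_inv_scalar:
  "mp_inv (mat 1 1 (\<lambda>_. g)) = mat 1 1 (\<lambda>_. if g = 0 then 0 else 1 / g)"
  (is "mp_inv ?G = ?X")
  unfolding mp_inv_def
proof (rule the_equality)
  show "?X \<in> carrier_mat (dim_col ?G) (dim_row ?G) \<and> ?G * ?X * ?G = ?G \<and> ?X * ?G * ?X = ?X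
      \<and> (?G * ?X)\<^sup>T = ?G * ?X \<and> (?X * ?G)\<^sup>T = ?X * ?G"
    by (auto intro!: eq_matI simp: scalar_prod_def)
next
  fix X assume X: "X \<in> carrier_mat (dim_col ?G) (dim_row ?G) \<and> ?G * X * ?G = ?G \<and> X * ?G * X = X
      \<and> (?G * X)\<^sup>T = ?G * X \<and> (X * ?G)\<^sup>T = X * ?G"
  then have X1: "X \<in> carrier_mat 1 1" and GXG: "?G * X * ?G = ?G" and XGX: "X * ?G * X = X"
    by simp_all
  define x where "x = X $$ (0,0)"
  have "g * x * g = (?G * X * ?G) $$ (0,0)" "x * g * x = (X * ?G * X) $$ (0,0)"
    using X1 by (simp_all add: scalar_prod_def x_def)
  then have "g * x * g = g" "x * g * x = x"
    unfolding GXG XGX by (simp_all add: x_def)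
  then have "x = (if g = 0 then 0 else 1 / g)"
    by (cases "g = 0") (auto simp: field_simps)
  then show "X = ?X"
    using X1 by (intro eq_matI) (auto simp: x_def)
qed

lemma sum_swap_pairs:
  "(\<Sum>i\<in>A. \<Sum>j\<in>B. \<Sum>q\<in>C. \<Sum>r\<in>D. f i j q r) = (\<Sum>r\<in>D. \<Sum>q\<in>C. \<Sum>i\<in>A. \<Sum>j\<in>B. f i j q r)"
proof -
  have "(\<Sum>i\<in>A. \<Sum>j\<in>B. \<Sum>q\<in>C. \<Sum>r\<in>D. f i j q r) = (\<Sum>q\<in>C. \<Sum>i\<in>A. \<Sum>j\<in>B. \<Sum>r\<in>D. f i j q r)"
    by (subst sum.swap) (rule sum.cong[OF refl], rule sum.swap)
  also have "\<dots> = (\<Sum>q\<in>C. \<Sum>r\<in>D. \<Sum>i\<in>A. \<Sum>j\<in>B. f i j q r)"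
    by (rule sum.cong[OF refl], subst sum.swap) (rule sum.cong[OF refl], rule sum.swap)
  also have "\<dots> = (\<Sum>r\<in>D. \<Sum>q\<in>C. \<Sum>i\<in>A. \<Sum>j\<in>B. f i j q r)"
    by (rule sum.swap)
  finally show ?thesis .
qed

section \<open>Positive definite matrices and the projection B\<close>

definition bilinear_form :: "real mat \<Rightarrow> nat \<Rightarrow> (nat \<Rightarrow> real) \<Rightarrow> (nat \<Rightarrow> real) \<Rightarrow> real" where
  "bilinear_form S n x y = (\<Sum>r<n. \<Sum>q<n. x r * S $$ (r,q) * y q)"

definition row_sum :: "real mat \<Rightarrow> nat \<Rightarrow> nat \<Rightarrow> real" where
  "row_sum S m r = (\<Sum>q<m. S $$ (r,q))"

lemma bilinear_form_vec:
  "S \<in> carrier_mat n n \<Longrightarrow> vec n x \<bullet> (S *\<^sub>v vec n y) = bilinear_form S n x y"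
  by (simp add: bilinear_form_def scalar_prod_def atLeast0LessThan sum_distrib_left row_def ac_simps)

lemma bilinear_form_commute:
  assumes "\<And>r q. r < n \<Longrightarrow> q < n \<Longrightarrow> S $$ (r,q) = S $$ (q,r)"
  shows "bilinear_form S n x y = bilinear_form S n y x"
  unfolding bilinear_form_def
  by (subst sum.swap) (auto intro!: sum.cong simp: assms ac_simps)

lemma bilinear_form_shift:
  "bilinear_form S n (\<lambda>r. y r - c) (\<lambda>r. y r - c)
     = bilinear_form S n y y - c * bilinear_form S n (\<lambda>_. 1) y - c * bilinear_form S n y (\<lambda>_. 1)
       + c * c * bilinear_form S n (\<lambda>_. 1) (\<lambda>_. 1)"
proof -
  have "bilinear_form S n (\<lambda>r. y r - c) (\<lambda>r. y r - c)
      = (\<Sum>r<n. \<Sum>q<n. y r * S $$ (r,q) * y q - c * (1 * S $$ (r,q) * y q)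
           - c * (y r * S $$ (r,q) * 1) + c * c * (1 * S $$ (r,q) * 1))"
    unfolding bilinear_form_def by (intro sum.cong) (auto simp: algebra_simps)
  then show ?thesis
    unfolding bilinear_form_def by (simp only: sum.distrib sum_subtractf sum_distrib_left)
qed

lemma bilinear_form_ones:
  "bilinear_form S n (\<lambda>_. 1) (\<lambda>_. 1) = (\<Sum>r<n. row_sum S n r)"
  by (simp add: bilinear_form_def row_sum_def)

lemma mult_ones_vec_index:
  "A \<in> carrier_mat n m \<Longrightarrow> r < n \<Longrightarrow> (A *\<^sub>v ones_vec m) $ r = row_sum A m r"
  by (simp add: ones_vec_def row_sum_def scalar_prod_def atLeast0LessThan)

lemma pos_def_mat_inv:
  assumes pd: "pos_def_mat k Sg"
  shows "mat_inv Sg \<in> carrier_mat k k" "Sg * mat_inv Sg = 1\<^sub>m k" "mat_inv Sg * Sg = 1\<^sub>m k"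
proof -
  have S: "Sg \<in> carrier_mat k k"
    using pd by (simp add: pos_def_mat_def)
  have "det Sg \<noteq> 0"
  proof
    assume "det Sg = 0"
    then obtain v where "v \<in> carrier_vec k" "v \<noteq> 0\<^sub>v k" "Sg *\<^sub>v v = 0\<^sub>v k"
      using det_0_iff_vec_prod_zero_field[OF S] by blast
    with pd show False
      unfolding pos_def_mat_def by (metis less_irrefl scalar_prod_right_zero)
  qed
  then obtain B where B: "B \<in> carrier_mat k k" "Sg * B = 1\<^sub>m k" "B * Sg = 1\<^sub>m k"
    using det_non_zero_imp_unit[OF S] by (auto simp: Units_def ring_mat_def)
  have "mat_inv Sg = B"
    unfolding mat_inv_def
  proof (rule the_equality)
    fix B' assume "B' \<in> carrier_mat (dim_row Sg) (dim_row Sg) \<and> Sg * B' = 1\<^sub>m (dim_row Sg) \<and> B' * Sg = 1\<^sub>m (dim_row Sg)"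
    then have B': "B' \<in> carrier_mat k k" "B' * Sg = 1\<^sub>m k"
      using S by auto
    have "B' = B' * (Sg * B)"
      using B B' right_mult_one_mat[of B' k k] by simp
    also have "\<dots> = (B' * Sg) * B"
      using B'(1) S B(1) by (rule assoc_mult_mat[symmetric])
    also have "\<dots> = B"
      using B B' by simp
    finally show "B' = B" .
  qed (use B S in auto)
  then show "mat_inv Sg \<in> carrier_mat k k" "Sg * mat_inv Sg = 1\<^sub>m k" "mat_inv Sg * Sg = 1\<^sub>m k"
    using B by simp_all
qed

lemma pos_def_mat_inv_symmetric:
  assumes pd: "pos_def_mat k Sg" and "r < k" "q < k"
  shows "mat_inv Sg $$ (r,q) = mat_inv Sg $$ (q,r)"
proof -
  define Si where "Si = mat_inv Sg"
  have S: "Sg \<in> carrier_mat k k" "Sg\<^sup>T = Sg"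
    using pd by (auto simp: pos_def_mat_def)
  note Si = pos_def_mat_inv[OF pd, folded Si_def]
  have "Si\<^sup>T * Sg = 1\<^sub>m k"
    using transpose_mult[OF S(1) Si(1)] S Si by simp
  have "Si\<^sup>T = Si\<^sup>T * (Sg * Si)"
    using Si by simp
  also have "\<dots> = (Si\<^sup>T * Sg) * Si"
    using Si S by (simp add: assoc_mult_mat)
  also have "\<dots> = Si"
    using \<open>Si\<^sup>T * Sg = 1\<^sub>m k\<close> Si by simp
  finally show ?thesis
    using assms Si(1) by (metis Si_def carrier_matD index_transpose_mat(1))
qed

lemma pos_def_mat_inv_quadratic_pos:
  assumes pd: "pos_def_mat k Sg" and y: "y \<in> carrier_vec k" "y \<noteq> 0\<^sub>v k"
  shows "y \<bullet> (mat_inv Sg *\<^sub>v y) > 0"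
proof -
  have S: "Sg \<in> carrier_mat k k" "Sg\<^sup>T = Sg"
    using pd by (auto simp: pos_def_mat_def)
  note Si = pos_def_mat_inv[OF pd]
  define z where "z = mat_inv Sg *\<^sub>v y"
  have z: "z \<in> carrier_vec k"
    using Si y by (simp add: z_def)
  have Sz: "Sg *\<^sub>v z = y"
    using Si S y by (simp add: z_def flip: assoc_mult_mat_vec)
  have "z \<noteq> 0\<^sub>v k"
    using Sz S y by auto
  then have "z \<bullet> (Sg *\<^sub>v z) > 0"
    using pd z unfolding pos_def_mat_def by blast
  also have "z \<bullet> (Sg *\<^sub>v z) = y \<bullet> (mat_inv Sg *\<^sub>v y)"
    using transpose_vec_mult_scalar[OF S(1) z z] S Sz by (simp add: z_def)
  finally show ?thesis .
qed

lemma bilinear_form_mat_inv_nonneg: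
  assumes pd: "pos_def_mat k Sg"
  shows "bilinear_form (mat_inv Sg) k y y \<ge> 0"
proof (cases "vec k y = 0\<^sub>v k")
  case True
  then have "\<And>r. r < k \<Longrightarrow> y r = 0"
    by (metis index_vec index_zero_vec(1))
  then show ?thesis
    by (simp add: bilinear_form_def)
next
  case False
  then show ?thesis
    using pos_def_mat_inv_quadratic_pos[OF pd, of "vec k y"] bilinear_form_vec[OF pos_def_mat_inv(1)[OF pd]]
    by simp
qed

lemma bilinear_form_mat_inv_ones_pos:
  assumes pd: "pos_def_mat k Sg" and "k > 0"
  shows "bilinear_form (mat_inv Sg) k (\<lambda>_. 1) (\<lambda>_. 1) > 0"
proof -
  have "vec k (\<lambda>_. 1) \<noteq> (0\<^sub>v k :: real vec)"
    using \<open>k > 0\<close> by (metis index_vec index_zero_vec(1) zero_neq_one)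
  then show ?thesis
    using pos_def_mat_inv_quadratic_pos[OF pd, of "vec k (\<lambda>_. 1)"] bilinear_form_vec[OF pos_def_mat_inv(1)[OF pd]]
    by simp
qed

lemma Btilde_carrier:
  assumes "pos_def_mat k Sg"
  shows "Btilde k Sg \<in> carrier_mat k k"
  using pos_def_mat_inv(1)[OF assms] by (auto simp: Btilde_def Let_def ones_vec_def)

lemma Btilde_entry:
  assumes pd: "pos_def_mat k Sg" and r: "r < k" and q: "q < k"
  defines "Si \<equiv> mat_inv Sg"
  shows "Btilde k Sg $$ (r,q)
    = Si $$ (r,q) - row_sum Si k r * row_sum Si k q / bilinear_form Si k (\<lambda>_. 1) (\<lambda>_. 1)"
proof -
  define e where "e = ones_vec k"
  have Si: "Si \<in> carrier_mat k k"
    using pos_def_mat_inv(1)[OF pd] by (simp add: Si_def)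
  have e: "mat_of_cols k [e] \<in> carrier_mat k 1" "mat_of_rows k [e] \<in> carrier_mat 1 k"
    by auto
  have "(Si * mat_of_cols k [e] * mat_of_rows k [e]) $$ (r,l) = row_sum Si k r" if "l < k" for l
    using r that Si e by (simp add: scalar_prod_def atLeast0LessThan row_sum_def e_def ones_vec_def mat_of_cols_def mat_of_rows_def)
  then have "(Si * mat_of_cols k [e] * mat_of_rows k [e] * Si) $$ (r,q)
      = (\<Sum>l<k. (Si * mat_of_cols k [e] * mat_of_rows k [e]) $$ (r,l) * Si $$ (l,q))"
    using r q Si e by (simp add: scalar_prod_def atLeast0LessThan)
  also have "\<dots> = (\<Sum>l<k. row_sum Si k r * Si $$ (q,l))"
    using \<open>\<And>l. l < k \<Longrightarrow> _\<close> pos_def_mat_inv_symmetric[OF pd _ q, folded Si_def]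
    by (intro sum.cong) simp_all
  also have "\<dots> = row_sum Si k r * row_sum Si k q"
    by (simp add: row_sum_def sum_distrib_left)
  moreover have "e \<bullet> (Si *\<^sub>v e) = bilinear_form Si k (\<lambda>_. 1) (\<lambda>_. 1)"
    using bilinear_form_vec[OF Si] by (simp add: e_def ones_vec_def)
  ultimately show ?thesis
    using r q Si by (simp add: Btilde_def Let_def flip: Si_def e_def)
qed

lemma Btilde_mult_ones:
  assumes pd: "pos_def_mat k Sg" and "k > 0"
  shows "Btilde k Sg *\<^sub>v ones_vec k = 0\<^sub>v k"
proof (rule eq_vecI)
  fix r assume "r < dim_vec (0\<^sub>v k :: real vec)"
  then have r: "r < k" by simp
  define Si where "Si = mat_inv Sg"
  define d where "d = bilinear_form Si k (\<lambda>_. 1) (\<lambda>_. 1)"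
  have "d > 0"
    using bilinear_form_mat_inv_ones_pos[OF assms] by (simp add: d_def Si_def)
  have "(\<Sum>q<k. row_sum Si k q) = d"
    by (simp add: d_def bilinear_form_ones)
  have "(Btilde k Sg *\<^sub>v ones_vec k) $ r = (\<Sum>q<k. Si $$ (r,q) - row_sum Si k r * row_sum Si k q / d)"
    using r by (simp add: mult_ones_vec_index[OF Btilde_carrier[OF pd]] row_sum_def Btilde_entry[OF pd]
        flip: Si_def d_def)
  also have "\<dots> = row_sum Si k r - row_sum Si k r * (\<Sum>q<k. row_sum Si k q) / d"
    by (simp add: sum_subtractf sum_distrib_left sum_divide_distrib row_sum_def)
  also have "\<dots> = 0"
    unfolding \<open>(\<Sum>q<k. row_sum Si k q) = d\<close> using \<open>d > 0\<close> by simp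
  finally show "(Btilde k Sg *\<^sub>v ones_vec k) $ r = 0\<^sub>v k $ r"
    using r by simp
qed (use Btilde_carrier[OF pd] in simp)

lemma Btilde_bilinear_form_nonneg:
  assumes pd: "pos_def_mat k Sg" and "k > 0"
  shows "bilinear_form (Btilde k Sg) k y y \<ge> 0"
proof -
  define Si where "Si = mat_inv Sg"
  define d where "d = bilinear_form Si k (\<lambda>_. 1) (\<lambda>_. 1)"
  define a where "a = bilinear_form Si k y (\<lambda>_. 1)"
  have "d > 0"
    using bilinear_form_mat_inv_ones_pos[OF assms] by (simp add: d_def Si_def)
  have a_sym: "bilinear_form Si k (\<lambda>_. 1) y = a"
    unfolding a_def Si_def by (rule bilinear_form_commute) (rule pos_def_mat_inv_symmetric[OF pd])
  have a_rows: "a = (\<Sum>r<k. y r * row_sum Si k r)"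
    by (simp add: a_def bilinear_form_def row_sum_def sum_distrib_left)
  \<comment> \<open>Cauchy-Schwarz for the form of the inverse of Sg: evaluate it at y minus the multiple
      of the all-ones vector that is orthogonal to it.\<close>
  have "0 \<le> bilinear_form Si k (\<lambda>r. y r - a / d) (\<lambda>r. y r - a / d)"
    unfolding Si_def by (rule bilinear_form_mat_inv_nonneg[OF pd])
  also have "\<dots> = bilinear_form Si k y y - a * a / d"
    unfolding bilinear_form_shift a_sym using \<open>d > 0\<close> by (simp add: a_def d_def field_simps)
  also have "\<dots> = bilinear_form (Btilde k Sg) k y y"
  proof -
    have "bilinear_form (Btilde k Sg) k y y
        = (\<Sum>r<k. \<Sum>q<k. y r * Si $$ (r,q) * y q - (y r * row_sum Si k r) * (y q * row_sum Si k q) / d)"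
      unfolding bilinear_form_def
      by (intro sum.cong) (simp_all add: Btilde_entry[OF pd] Si_def d_def algebra_simps)
    moreover have "(\<Sum>r<k. \<Sum>q<k. (y r * row_sum Si k r) * (y q * row_sum Si k q) / d) = a * a / d"
      by (simp add: a_rows sum_product sum_divide_distrib)
    ultimately show ?thesis
      by (simp add: sum_subtractf bilinear_form_def)
  qed
  finally show ?thesis .
qed

section \<open>The matrices C_s and C_xi\<close>

lemma ones_vec_carrier[simp]: "ones_vec n \<in> carrier_vec n"
  by (simp add: ones_vec_def)

lemma Tmat_carrier[simp]: "Tmat k t s \<in> carrier_mat k t"
  by (simp add: Tmat_def)

lemma Hmat_carrier[simp]: "Hmat k \<in> carrier_mat k k"
  by (simp add: Hmat_def)

lemma Tmat_mult_ones:
  assumes "s \<in> seqs k t"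
  shows "Tmat k t s *\<^sub>v ones_vec t = ones_vec k"
proof (rule eq_vecI)
  fix q assume "q < dim_vec (ones_vec k)"
  then have q: "q < k" by (simp add: ones_vec_def)
  then have "s ! q < t"
    using assms by (auto simp: seqs_def dest: nth_mem)
  then show "(Tmat k t s *\<^sub>v ones_vec t) $ q = ones_vec k $ q"
    unfolding mult_ones_vec_index[OF Tmat_carrier q] using q by (simp add: Tmat_def row_sum_def ones_vec_def)
qed (simp add: Tmat_def ones_vec_def)

lemma Hmat_mult_ones: "Hmat k *\<^sub>v ones_vec k = ones_vec k"
proof (rule eq_vecI)
  fix q assume "q < dim_vec (ones_vec k)"
  then have q: "q < k" by (simp add: ones_vec_def)
  define j0 where "j0 = (if q = 0 then k - 1 else q - 1)"
  have "q = (j + 1) mod k \<longleftrightarrow> j = j0" if "j < k" for j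
    using q that by (cases "j + 1 = k") (auto simp: j0_def)
  then have "row_sum (Hmat k) k q = (\<Sum>j<k. if j = j0 then 1 else 0)"
    unfolding row_sum_def using q by (intro sum.cong) (simp_all add: Hmat_def)
  also have "\<dots> = 1"
    using q by (auto simp: j0_def)
  finally show "(Hmat k *\<^sub>v ones_vec k) $ q = ones_vec k $ q"
    unfolding mult_ones_vec_index[OF Hmat_carrier q] using q by (simp add: ones_vec_def)
qed (simp add: Hmat_def ones_vec_def)

lemma Hmat_transpose_mult_ones: "(Hmat k)\<^sup>T *\<^sub>v ones_vec k = ones_vec k"
proof (rule eq_vecI)
  fix q assume "q < dim_vec (ones_vec k)"
  then have q: "q < k" by (simp add: ones_vec_def)
  have HT: "(Hmat k)\<^sup>T \<in> carrier_mat k k"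
    by (simp add: Hmat_def)
  have "row_sum (Hmat k)\<^sup>T k q = (\<Sum>j<k. if j = (q + 1) mod k then 1 else 0)"
    unfolding row_sum_def using q by (intro sum.cong) (auto simp: Hmat_def)
  also have "\<dots> = 1"
    using q by simp
  finally show "((Hmat k)\<^sup>T *\<^sub>v ones_vec k) $ q = ones_vec k $ q"
    unfolding mult_ones_vec_index[OF HT q] using q by (simp add: ones_vec_def)
qed (simp add: Hmat_def ones_vec_def)

lemma Gmat_carrier[simp]: "Gmat k t s i \<in> carrier_mat k t"
  by (auto simp: Gmat_def Lmat_def Rmat_def intro!: mult_carrier_mat[of _ k k])

lemma Gmat_mult_ones:
  assumes "s \<in> seqs k t"
  shows "Gmat k t s i *\<^sub>v ones_vec t = ones_vec k"
proof -
  have "Hmat k * Tmat k t s *\<^sub>v ones_vec t = ones_vec k" "(Hmat k)\<^sup>T * Tmat k t s *\<^sub>v ones_vec t = ones_vec k"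
    by (simp_all add: Tmat_mult_ones[OF assms] Hmat_mult_ones Hmat_transpose_mult_ones
        assoc_mult_mat_vec[of _ k k _ t])
  then show ?thesis
    using Tmat_mult_ones[OF assms] by (simp add: Gmat_def Lmat_def Rmat_def)
qed

lemma Cs_carrier:
  assumes "pos_def_mat k Sg"
  shows "Cs k t Sg s i j \<in> carrier_mat t t"
  using Btilde_carrier[OF assms] by (auto simp: Cs_def intro!: mult_carrier_mat[of _ t k])

lemma Cs_mult_ones:
  assumes "pos_def_mat k Sg" "k > 0" "s \<in> seqs k t"
  shows "Cs k t Sg s i j *\<^sub>v ones_vec t = 0\<^sub>v t"
proof -
  have B: "Btilde k Sg \<in> carrier_mat k k"
    using Btilde_carrier[OF assms(1)] .
  have GB: "(Gmat k t s i)\<^sup>T * Btilde k Sg \<in> carrier_mat t k"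
    using B by (simp add: mult_carrier_mat[of _ t k])
  have "Cs k t Sg s i j *\<^sub>v ones_vec t = ((Gmat k t s i)\<^sup>T * Btilde k Sg) *\<^sub>v (Gmat k t s j *\<^sub>v ones_vec t)"
    unfolding Cs_def by (rule assoc_mult_mat_vec[OF GB Gmat_carrier ones_vec_carrier])
  also have "\<dots> = ((Gmat k t s i)\<^sup>T * Btilde k Sg) *\<^sub>v ones_vec k"
    by (simp add: Gmat_mult_ones[OF assms(3)])
  also have "\<dots> = (Gmat k t s i)\<^sup>T *\<^sub>v (Btilde k Sg *\<^sub>v ones_vec k)"
    using B by (intro assoc_mult_mat_vec[of _ t k _ k]) simp_all
  also have "\<dots> = 0\<^sub>v t"
    unfolding Btilde_mult_ones[OF assms(1,2)] using carrier_matD[OF Gmat_carrier[of k t s i]]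
    by (intro eq_vecI) (auto simp: scalar_prod_def)
  finally show ?thesis .
qed

lemma Cs_entry:
  assumes "pos_def_mat k Sg" and "a < t" "b < t"
  shows "Cs k t Sg s i j $$ (a,b)
    = (\<Sum>q<k. (\<Sum>r<k. Gmat k t s i $$ (r,a) * Btilde k Sg $$ (r,q)) * Gmat k t s j $$ (q,b))"
  using assms carrier_matD[OF Btilde_carrier[OF assms(1)]] carrier_matD[OF Gmat_carrier]
  by (simp add: Cs_def scalar_prod_def atLeast0LessThan)

lemma Cs_diag_quadratic_nonneg:
  assumes pd: "pos_def_mat k Sg" and "k > 0" and a: "a < t"
  shows "(\<Sum>i<3. \<Sum>j<3. u i * u j * Cs k t Sg s i j $$ (a,a)) \<ge> 0"
proof -
  define y where "y r = (\<Sum>i<3. u i * Gmat k t s i $$ (r,a))" for r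
  have "(\<Sum>i<3. \<Sum>j<3. u i * u j * Cs k t Sg s i j $$ (a,a))
      = (\<Sum>i<3. \<Sum>j<3. \<Sum>q<k. \<Sum>r<k.
           (u i * Gmat k t s i $$ (r,a)) * Btilde k Sg $$ (r,q) * (u j * Gmat k t s j $$ (q,a)))"
    by (simp add: Cs_entry[OF pd a a] sum_distrib_left sum_distrib_right ac_simps)
  also have "\<dots> = (\<Sum>r<k. \<Sum>q<k. \<Sum>i<3. \<Sum>j<3.
           (u i * Gmat k t s i $$ (r,a)) * Btilde k Sg $$ (r,q) * (u j * Gmat k t s j $$ (q,a)))"
    by (rule sum_swap_pairs)
  also have "\<dots> = bilinear_form (Btilde k Sg) k y y"
    unfolding bilinear_form_def y_def sum_distrib_left sum_distrib_right
    by (rule sum.cong[OF refl], rule sum.cong[OF refl], rule sum.swap)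
  also have "\<dots> \<ge> 0"
    by (rule Btilde_bilinear_form_nonneg[OF pd \<open>k > 0\<close>])
  finally show ?thesis .
qed

lemma Cxi_row_sum:
  assumes "pos_def_mat k Sg" "k > 0" "a < t"
  shows "(\<Sum>b<t. Cxi k t Sg p i j $$ (a,b)) = 0"
proof -
  have "(\<Sum>b<t. Cxi k t Sg p i j $$ (a,b)) = (\<Sum>s\<in>seqs k t. p s * row_sum (Cs k t Sg s i j) t a)"
    using assms(3) by (simp add: Cxi_def row_sum_def sum_distrib_left sum.swap[of _ "{..<t}"])
  also have "\<dots> = 0"
  proof -
    have "row_sum (Cs k t Sg s i j) t a = 0" if "s \<in> seqs k t" for s
      unfolding mult_ones_vec_index[OF Cs_carrier[OF assms(1)] assms(3), symmetric]
        Cs_mult_ones[OF assms(1,2) that]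
      using assms(3) by simp
    then show ?thesis
      by simp
  qed
  finally show ?thesis .
qed

lemma Vxi_quadratic_nonneg:
  assumes pd: "pos_def_mat k Sg" and "k > 0" and meas: "is_measure k t p" and u: "u \<in> carrier_vec 3"
  shows "u \<bullet> (Vxi k t Sg p *\<^sub>v u) \<ge> 0"
proof -
  have "u \<bullet> (Vxi k t Sg p *\<^sub>v u) = (\<Sum>i<3. \<Sum>j<3. u $ i * u $ j * Vxi k t Sg p $$ (i,j))"
    using u by (simp add: Vxi_def scalar_prod_def atLeast0LessThan row_def sum_distrib_left ac_simps)
  also have "\<dots> = (\<Sum>i<3. \<Sum>j<3. \<Sum>x<t. \<Sum>s\<in>seqs k t. u $ i * u $ j * (p s * Cs k t Sg s i j $$ (x,x)))"
    by (simp add: Vxi_def trace_mat_def Cxi_def sum_distrib_left)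
  also have "\<dots> = (\<Sum>s\<in>seqs k t. \<Sum>x<t. \<Sum>i<3. \<Sum>j<3. u $ i * u $ j * (p s * Cs k t Sg s i j $$ (x,x)))"
    by (rule sum_swap_pairs)
  also have "\<dots> = (\<Sum>s\<in>seqs k t. \<Sum>x<t. p s * (\<Sum>i<3. \<Sum>j<3. u $ i * u $ j * Cs k t Sg s i j $$ (x,x)))"
    by (simp add: sum_distrib_left ac_simps)
  also have "\<dots> \<ge> 0"
    by (rule sum_nonneg, rule sum_nonneg, rule mult_nonneg_nonneg)
      (use meas Cs_diag_quadratic_nonneg[OF pd \<open>k > 0\<close>, of _ t "\<lambda>i. u $ i"] in \<open>auto simp: is_measure_def\<close>)
  finally show ?thesis .
qed

section \<open>Pseudo symmetric measures\<close>

lemma completely_symmetric_zero_row_sums: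
  assumes "completely_symmetric t A" and t: "t \<ge> 2"
    and rows: "\<And>a. a < t \<Longrightarrow> (\<Sum>b<t. A $$ (a,b)) = 0" and x: "x < t" and y: "y < t"
  shows "A $$ (x,y) = trace_mat A / (real t - 1) * ((if x = y then 1 else 0) - 1 / real t)"
proof -
  obtain \<alpha> \<beta> where A: "A = \<alpha> \<cdot>\<^sub>m 1\<^sub>m t + \<beta> \<cdot>\<^sub>m mat t t (\<lambda>_. 1)"
    using assms(1) unfolding completely_symmetric_def by blast
  have entry: "A $$ (a,b) = (if a = b then \<alpha> else 0) + \<beta>" if "a < t" "b < t" for a b
    using that by (simp add: A)
  have "0 = (\<Sum>b<t. A $$ (0,b))"
    using rows t by simp
  also have "\<dots> = \<alpha> + real t * \<beta>"
    using t by (simp add: entry sum.distrib)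
  finally have row0: "\<alpha> + real t * \<beta> = 0" ..
  have "trace_mat A = real t * \<alpha> + real t * \<beta>"
    unfolding trace_mat_def using A by (simp add: entry algebra_simps)
  then have "trace_mat A / (real t - 1) = \<alpha>"
    using t row0 by (simp add: field_simps)
  moreover have "\<beta> = - \<alpha> / real t"
    using t row0 by (simp add: field_simps)
  ultimately show ?thesis
    using x y by (simp add: entry algebra_simps)
qed

lemma ell_carrier: "ell lam \<in> carrier_vec 3" "ell2 \<in> carrier_vec 3"
  unfolding carrier_vec_def ell_def ell2_def by simp_all

lemma Cuw_carrier: "Cuw k t Sg p u w \<in> carrier_mat t t"
  by (simp add: Cuw_def)

context
  fixes k t :: nat and Sg :: "real mat" and p :: "nat list \<Rightarrow> real"
  assumes k: "k > 0" and t: "t \<ge> 2"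
    and pd: "pos_def_mat k Sg" and ps: "pseudo_symmetric k t Sg p"
begin

lemma Cxi_entry:
  assumes "i < 3" "j < 3" "x < t" "y < t"
  shows "Cxi k t Sg p i j $$ (x,y)
    = Vxi k t Sg p $$ (i,j) / (real t - 1) * ((if x = y then 1 else 0) - 1 / real t)"
  using completely_symmetric_zero_row_sums[of t "Cxi k t Sg p i j"] ps Cxi_row_sum[OF pd k] t assms
  by (simp add: pseudo_symmetric_def Vxi_def)

lemma Cuw_entry:
  assumes u: "u \<in> carrier_vec 3" and w: "w \<in> carrier_vec 3" and "x < t" "y < t"
  shows "Cuw k t Sg p u w $$ (x,y)
    = u \<bullet> (Vxi k t Sg p *\<^sub>v w) / (real t - 1) * ((if x = y then 1 else 0) - 1 / real t)"
proof -
  have "Cuw k t Sg p u w $$ (x,y) = (\<Sum>i<3. u $ i * (\<Sum>j<3. Vxi k t Sg p $$ (i,j) * w $ j))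
      / (real t - 1) * ((if x = y then 1 else 0) - 1 / real t)"
    using assms by (simp add: Cuw_def Cxi_entry sum_distrib_left sum_distrib_right sum_divide_distrib ac_simps)
  also have "(\<Sum>i<3. u $ i * (\<Sum>j<3. Vxi k t Sg p $$ (i,j) * w $ j)) = u \<bullet> (Vxi k t Sg p *\<^sub>v w)"
    using u w by (simp add: Vxi_def scalar_prod_def atLeast0LessThan row_def)
  finally show ?thesis .
qed

lemma Cuw_mult_contrast:
  assumes u: "u \<in> carrier_vec 3" and w: "w \<in> carrier_vec 3"
    and tau: "tau \<in> carrier_vec t" "(\<Sum>i<t. tau $ i) = 0"
  shows "Cuw k t Sg p u w *\<^sub>v tau = (u \<bullet> (Vxi k t Sg p *\<^sub>v w) / (real t - 1)) \<cdot>\<^sub>v tau"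
proof (rule eq_vecI)
  fix b assume "b < dim_vec ((u \<bullet> (Vxi k t Sg p *\<^sub>v w) / (real t - 1)) \<cdot>\<^sub>v tau)"
  then have b: "b < t"
    using tau by simp
  define c where "c = u \<bullet> (Vxi k t Sg p *\<^sub>v w) / (real t - 1)"
  have "(Cuw k t Sg p u w *\<^sub>v tau) $ b = (\<Sum>y<t. Cuw k t Sg p u w $$ (b,y) * tau $ y)"
    using b tau carrier_matD[OF Cuw_carrier] by (simp add: scalar_prod_def atLeast0LessThan)
  also have "\<dots> = (\<Sum>y<t. (if b = y then c * tau $ y else 0) - c / real t * tau $ y)"
    by (intro sum.cong refl) (simp add: Cuw_entry[OF u w b] flip: c_def, simp add: algebra_simps)
  also have "\<dots> = c * tau $ b - c / real t * (\<Sum>y<t. tau $ y)"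
    using b by (simp add: sum_subtractf sum_distrib_left)
  finally show "(Cuw k t Sg p u w *\<^sub>v tau) $ b = (c \<cdot>\<^sub>v tau) $ b"
    using b tau by (simp add: c_def)
qed (use tau carrier_matD[OF Cuw_carrier] in simp)

text \<open>The right-hand side is shaped to match char_poly_scalar_plus_orthogonal_rank_two
  with u the all-ones vector and w = tau.\<close>

lemma Ctilde_eq:
  fixes lam :: real
  assumes tau: "tau \<in> contrast_set t"
  defines "V \<equiv> Vxi k t Sg p"
  defines "c \<equiv> ell lam \<bullet> (V *\<^sub>v ell lam) / (real t - 1)"
  defines "d \<equiv> ell lam \<bullet> (V *\<^sub>v ell2) / (real t - 1)"
  defines "g \<equiv> ell2 \<bullet> (V *\<^sub>v ell2) / (real t - 1) * (tau \<bullet> tau)"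
  shows "Ctilde k t Sg p lam tau = mat t t (\<lambda>(x,y). (if x = y then c else 0) + (- c / real t) * 1 * 1
           + (- d\<^sup>2 * (if g = 0 then 0 else 1 / g)) * tau $ x * tau $ y)"
    (is "_ = ?M")
proof -
  have tc: "tau \<in> carrier_vec t" and "ones_vec t \<bullet> tau = 0"
    using tau by (auto simp: contrast_set_def)
  then have sum0: "(\<Sum>i<t. tau $ i) = 0"
    by (simp add: ones_vec_def scalar_prod_def atLeast0LessThan)
  note ell = ell_carrier(1)[of lam] ell_carrier(2)
  define F where "F = mat 1 t (\<lambda>(a,b). (Cuw k t Sg p (ell lam) ([ell2] ! a) *\<^sub>v tau) $ b)"
  define G where "G = mat 1 1 (\<lambda>(a,b). tau \<bullet> (Cuw k t Sg p ([ell2] ! a) ([ell2] ! b) *\<^sub>v tau))"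
  have info: "Ctilde k t Sg p lam tau = Cuw k t Sg p (ell lam) (ell lam) - F\<^sup>T * mp_inv G * F"
    by (simp add: Ctilde_def Info_def Let_def F_def G_def)
  have F: "F = mat 1 t (\<lambda>(_,b). d * tau $ b)"
    using tc by (intro eq_matI) (auto simp: F_def Cuw_mult_contrast[OF ell tc sum0] V_def d_def)
  have "G = mat 1 1 (\<lambda>_. g)"
    using tc by (intro eq_matI) (auto simp: G_def Cuw_mult_contrast[OF ell(2) ell(2) tc sum0] V_def g_def)
  then have G: "mp_inv G = mat 1 1 (\<lambda>_. if g = 0 then 0 else 1 / g)"
    by (simp only: mp_inv_scalar)
  show ?thesis
    unfolding info G F
  proof (rule eq_matI)
    fix x y assume "x < dim_row ?M" "y < dim_col ?M"
    then have x: "x < t" and y: "y < t" by auto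
    have "Cuw k t Sg p (ell lam) (ell lam) $$ (x,y) = c * ((if x = y then 1 else 0) - 1 / real t)"
      unfolding Cuw_entry[OF ell(1) ell(1) x y] V_def[symmetric] c_def[symmetric] ..
    moreover have "((mat 1 t (\<lambda>(_,b). d * tau $ b))\<^sup>T * mat 1 1 (\<lambda>_. if g = 0 then 0 else 1 / g)
        * mat 1 t (\<lambda>(_,b). d * tau $ b)) $$ (x,y) = d * tau $ x * (if g = 0 then 0 else 1 / g) * (d * tau $ y)"
      using x y by (simp add: scalar_prod_def)
    ultimately show "(Cuw k t Sg p (ell lam) (ell lam) - (mat 1 t (\<lambda>(_,b). d * tau $ b))\<^sup>T
        * mat 1 1 (\<lambda>_. if g = 0 then 0 else 1 / g) * mat 1 t (\<lambda>(_,b). d * tau $ b)) $$ (x,y) = ?M $$ (x,y)"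
      using x y carrier_matD[OF Cuw_carrier] by (simp add: power2_eq_square algebra_simps)
  qed (use carrier_matD[OF Cuw_carrier] in simp_all)
qed

lemma char_poly_Ctilde:
  fixes lam :: real
  assumes tau: "tau \<in> contrast_set t"
  defines "V \<equiv> Vxi k t Sg p"
  defines "Q2 \<equiv> ell2 \<bullet> (V *\<^sub>v ell2)"
  defines "lVl \<equiv> ell lam \<bullet> (V *\<^sub>v ell lam)"
  defines "q2 \<equiv> lVl - (ell lam \<bullet> (V *\<^sub>v ell2))\<^sup>2 * (if Q2 = 0 then 0 else 1 / Q2)"
  shows "char_poly (Ctilde k t Sg p lam tau)
    = [:0, 1:] * [:- (q2 / (real t - 1)), 1:] * [:- (lVl / (real t - 1)), 1:] ^ (t - 2)"
proof -
  have tc: "tau \<in> carrier_vec t" and "ones_vec t \<bullet> tau = 0" and "tau \<noteq> 0\<^sub>v t"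
    using tau by (auto simp: contrast_set_def)
  then have sum0: "(\<Sum>i<t. 1 * tau $ i) = 0"
    by (simp add: ones_vec_def scalar_prod_def atLeast0LessThan)
  define S where "S = tau \<bullet> tau"
  have S: "S = (\<Sum>i<t. tau $ i * tau $ i)"
    using tc by (simp add: S_def scalar_prod_def atLeast0LessThan)
  have "S > 0"
    using conjugate_square_greater_0_vec[OF tc] \<open>tau \<noteq> 0\<^sub>v t\<close> by (simp add: S_def)
  define c where "c = lVl / (real t - 1)"
  define d where "d = ell lam \<bullet> (V *\<^sub>v ell2) / (real t - 1)"
  define g where "g = Q2 / (real t - 1) * S"
  have "Ctilde k t Sg p lam tau = mat t t (\<lambda>(x,y). (if x = y then c else 0) + (- c / real t) * 1 * 1
           + (- d\<^sup>2 * (if g = 0 then 0 else 1 / g)) * tau $ x * tau $ y)"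
    unfolding c_def d_def g_def S_def lVl_def Q2_def V_def by (rule Ctilde_eq[OF tau])
  then have "char_poly (Ctilde k t Sg p lam tau)
      = [:- (c + (- c / real t) * (\<Sum>i<t. 1 * 1)), 1:]
        * [:- (c + (- d\<^sup>2 * (if g = 0 then 0 else 1 / g)) * S), 1:] * [:- c, 1:] ^ (t - 2)"
    unfolding S by (simp only: char_poly_scalar_plus_orthogonal_rank_two[OF t sum0])
  also have "c + (- c / real t) * (\<Sum>i<t. 1 * 1) = 0"
    using t by simp
  also have "c + (- d\<^sup>2 * (if g = 0 then 0 else 1 / g)) * S = q2 / (real t - 1)"
  proof (cases "Q2 = 0")
    case True
    then show ?thesis
      by (simp add: q2_def c_def g_def)
  next
    case False
    define T where "T = real t - 1"
    have "T > 0"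
      using t by (simp add: T_def)
    then have "d\<^sup>2 * (1 / g) * S = (ell lam \<bullet> (V *\<^sub>v ell2))\<^sup>2 / Q2 / T"
      using False \<open>S > 0\<close> by (simp add: d_def g_def power2_eq_square field_simps flip: T_def)
    moreover have "g \<noteq> 0"
      using False \<open>S > 0\<close> \<open>T > 0\<close> by (simp add: g_def flip: T_def)
    ultimately show ?thesis
      using False by (simp add: q2_def c_def diff_divide_distrib flip: T_def)
  qed
  finally show ?thesis
    by (simp add: c_def)
qed

end

theorem proposition5:
  fixes k t :: nat and Sg :: "real mat" and p :: "nat list \<Rightarrow> real" and lam :: real
  assumes "k \<ge> 2" and "t \<ge> 2"
    and "pos_def_mat k Sg"
    and "is_measure k t p"
    and "pseudo_symmetric k t Sg p"
  defines "V \<equiv> Vxi k t Sg p"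
  defines "Q2 \<equiv> ell2 \<bullet> (V *\<^sub>v ell2)"
  defines "lVl \<equiv> ell lam \<bullet> (V *\<^sub>v ell lam)"
  defines "q2 \<equiv> lVl - (ell lam \<bullet> (V *\<^sub>v ell2))\<^sup>2 * (if Q2 = 0 then 0 else 1 / Q2)"
  shows "(\<forall>tau \<in> contrast_set t.
            char_poly (Ctilde k t Sg p lam tau) =
              [:0, 1:] * [:- (q2 / (real t - 1)), 1:] * [:- (lVl / (real t - 1)), 1:] ^ (t - 2))
         \<and> q2 \<le> lVl"
proof
  have "k > 0"
    using assms(1) by simp
  then show "\<forall>tau \<in> contrast_set t. char_poly (Ctilde k t Sg p lam tau) =
      [:0, 1:] * [:- (q2 / (real t - 1)), 1:] * [:- (lVl / (real t - 1)), 1:] ^ (t - 2)"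
    using char_poly_Ctilde[OF _ assms(2,3,5)] unfolding q2_def lVl_def Q2_def V_def by blast
  have "Q2 \<ge> 0"
    unfolding Q2_def V_def by (rule Vxi_quadratic_nonneg[OF assms(3) \<open>k > 0\<close> assms(4) ell_carrier(2)])
  then show "q2 \<le> lVl"
    by (simp add: q2_def)
qed

end
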